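(* Let $p\in\mathbb N$. (i) If $\mathbf K$ is a finite field, the group $\mathrm{GL}_{p-rec}(\mathbf K)$ is residually finite. (ii) If $\mathbf K$ is an arbitrary (commutative) field, every finitely generated subgroup $\Gamma\subset\mathrm{GL}_{p-rec}(\mathbf K)$ is residually finite.
   Context: $\mathcal M_{p\times p}$ is the monoid of pairs $(U,W)$ of words of common length over $\{0,\dots,p-1\}$. For $A:\mathcal M_{p\times p}\to\mathbf K$ (values $A[U,W]$), shift maps act by $(\rho(S,T)A)[U,W]=A[US,WT]$; $\mathrm{Rec}_{p\times p}(\mathbf K)$ is the set of $A$ for which the span of $\{\rho(S,T)A\}$ is finite-dimensional. It is an algebra for $(AB)[U,W]=\sum_{V\in\{0,\dots,p-1\}^l}A[U,V]B[V,W]$ ($(U,W)$ of length $l$) with identity $\mathrm{Id}[U,W]=\delta_{U,W}$. $\mathrm{GL}_{p-rec}(\mathbf K)$ is the group of units of $\mathrm{Rec}_{p\times p}(\mathbf K)$. A group $\Gamma$ is residually finite if for every $\gamma\ne1$ there is a homomorphism $\pi$ to a finite group with $\pi(\gamma)\ne1$. *)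

theory Defs
  imports "HOL-Algebra.Algebra"
begin

text \<open>Words over the alphabet {0,...,p-1} are lists of naturals with entries < p.
  A function on the monoid M_{p x p} is represented as a function of two lists,
  required to vanish outside the monoid (pairs of words of common length).\<close>

definition valid_pair :: "nat \<Rightarrow> nat list \<Rightarrow> nat list \<Rightarrow> bool" where
  "valid_pair p U W \<longleftrightarrow> length U = length W \<and> set U \<subseteq> {..<p} \<and> set W \<subseteq> {..<p}"

definition words :: "nat \<Rightarrow> nat \<Rightarrow> nat list set" where
  "words p l = {V. length V = l \<and> set V \<subseteq> {..<p}}"

definition is_pseries :: "nat \<Rightarrow> (nat list \<Rightarrow> nat list \<Rightarrow> 'k::field) \<Rightarrow> bool" where
  "is_pseries p A \<longleftrightarrow> (\<forall>U W. \<not> valid_pair p U W \<longrightarrow> A U W = 0)"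

definition shift :: "(nat list \<Rightarrow> nat list \<Rightarrow> 'k) \<Rightarrow> nat list \<Rightarrow> nat list \<Rightarrow> (nat list \<Rightarrow> nat list \<Rightarrow> 'k)" where
  "shift A S T = (\<lambda>U W. A (U @ S) (W @ T))"

text \<open>Recognizable: the linear span of all shifts is finite-dimensional, i.e. all shifts
  lie in the span of a finite family F.\<close>
definition recognizable :: "nat \<Rightarrow> (nat list \<Rightarrow> nat list \<Rightarrow> 'k::field) \<Rightarrow> bool" where
  "recognizable p A \<longleftrightarrow> is_pseries p A \<and>
     (\<exists>F. finite F \<and> (\<forall>S T. valid_pair p S T \<longrightarrow>
        (\<exists>c. shift A S T = (\<lambda>U W. \<Sum>f\<in>F. c f * f U W))))"

definition rec_mult :: "nat \<Rightarrow> (nat list \<Rightarrow> nat list \<Rightarrow> 'k::field) \<Rightarrow> (nat list \<Rightarrow> nat list \<Rightarrow> 'k) \<Rightarrow> (nat list \<Rightarrow> nat list \<Rightarrow> 'k)" where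
  "rec_mult p A B = (\<lambda>U W. if valid_pair p U W
      then (\<Sum>V\<in>words p (length U). A U V * B V W) else 0)"

definition rec_id :: "nat \<Rightarrow> (nat list \<Rightarrow> nat list \<Rightarrow> 'k::field)" where
  "rec_id p = (\<lambda>U W. if valid_pair p U W \<and> U = W then 1 else 0)"

definition Rec_monoid :: "nat \<Rightarrow> (nat list \<Rightarrow> nat list \<Rightarrow> 'k::field) monoid" where
  "Rec_monoid p = \<lparr>carrier = {A. recognizable p A}, Group.monoid.mult = rec_mult p, one = rec_id p\<rparr>"

definition GL_rec :: "nat \<Rightarrow> (nat list \<Rightarrow> nat list \<Rightarrow> 'k::field) monoid" where
  "GL_rec p = units_of (Rec_monoid p)"

text \<open>Residual finiteness. Every finite group is isomorphic to one whose carrier is a set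
  of naturals, so targets are taken to be groups with elements of type nat.\<close>
definition residually_finite :: "('a, 'b) monoid_scheme \<Rightarrow> bool" where
  "residually_finite G \<longleftrightarrow> (\<forall>g\<in>carrier G. g \<noteq> \<one>\<^bsub>G\<^esub> \<longrightarrow>
     (\<exists>(H :: nat monoid) h. group H \<and> finite (carrier H) \<and> h \<in> hom G H \<and> h g \<noteq> \<one>\<^bsub>H\<^esub>))"

end

theory Submission
  imports Defs "HOL-Computational_Algebra.Polynomial" "HOL-Computational_Algebra.Primes"
begin

text \<open>An element \<open>g \<noteq> 1\<close> of \<open>GL_rec p\<close> differs from the identity in some entry of its
  level-\<open>l\<close> matrix \<open>(g U V)\<close>, indexed by the words of length \<open>l\<close>, and products are computed
  level by level. If all level-\<open>l\<close> entries of a group \<open>\<Gamma>\<close> lie in a subring \<open>R\<close> of \<open>K\<close> and \<open>I\<close> is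
  an ideal of finite index of \<open>R\<close>, then \<open>\<Gamma>\<close> permutes the finitely many \<open>R / I\<close>-vectors indexed by
  these words, and \<open>g\<close> acts nontrivially as soon as the distinguished entry of \<open>g - 1\<close> is not in \<open>I\<close>.

  For a finite field take \<open>R = K\<close> and \<open>I = 0\<close>. For a finitely generated \<open>\<Gamma>\<close> take for \<open>R\<close> the ring
  generated by the entries of the generators and their inverses (Mal'cev's argument): every nonzero
  element of such a ring lies outside some ideal \<open>I\<close> with \<open>R / I\<close> a finite field. This holds for
  the image of \<open>\<int>\<close> and passes from \<open>R\<close> to \<open>R[a]\<close>: if \<open>a\<close> is transcendental over \<open>R\<close>, the element
  \<open>f(a)\<close> is inverted by adjoining the relation \<open>t a f(a) = 1\<close>; if \<open>a\<close> is algebraic, \<open>f(a)\<close> divides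
  a nonzero element of \<open>R\<close>. In both cases the ideal generated by \<open>I\<close> and one polynomial relation is
  proper and of finite index in \<open>R[a]\<close>, and hence lies in an ideal with finite residue field.\<close>

section \<open>Subrings, ideals and polynomials over a subring\<close>

definition is_subring :: "'a::comm_ring_1 set \<Rightarrow> bool" where
  "is_subring R \<longleftrightarrow> 0 \<in> R \<and> 1 \<in> R \<and> (\<forall>x\<in>R. \<forall>y\<in>R. x + y \<in> R \<and> x * y \<in> R) \<and> (\<forall>x\<in>R. - x \<in> R)"

definition is_ideal :: "'a::comm_ring_1 set \<Rightarrow> 'a set \<Rightarrow> bool" where
  "is_ideal R I \<longleftrightarrow> I \<subseteq> R \<and> 0 \<in> I \<and> (\<forall>x\<in>I. \<forall>y\<in>I. x + y \<in> I) \<and> (\<forall>x\<in>I. \<forall>r\<in>R. r * x \<in> I)"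

definition finite_index :: "'a::comm_ring_1 set \<Rightarrow> 'a set \<Rightarrow> bool" where
  "finite_index R I \<longleftrightarrow> (\<exists>C. finite C \<and> C \<subseteq> R \<and> (\<forall>r\<in>R. \<exists>c\<in>C. r - c \<in> I))"

definition finite_residue_field :: "'a::comm_ring_1 set \<Rightarrow> 'a set \<Rightarrow> bool" where
  "finite_residue_field R I \<longleftrightarrow> is_ideal R I \<and> 1 \<notin> I \<and> finite_index R I \<and>
     (\<forall>r\<in>R. r \<notin> I \<longrightarrow> (\<exists>s\<in>R. r * s - 1 \<in> I))"

definition separated_by_finite_fields :: "'a::comm_ring_1 set \<Rightarrow> bool" where
  "separated_by_finite_fields R \<longleftrightarrow> (\<forall>x\<in>R. x \<noteq> 0 \<longrightarrow> (\<exists>I. finite_residue_field R I \<and> x \<notin> I))"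

definition poly_over :: "'a::comm_ring_1 set \<Rightarrow> 'a poly \<Rightarrow> bool" where
  "poly_over R h \<longleftrightarrow> (\<forall>i. coeff h i \<in> R)"

definition adjoin :: "'a::comm_ring_1 set \<Rightarrow> 'a \<Rightarrow> 'a set" where
  "adjoin R a = {poly h a | h. poly_over R h}"

context
  fixes R :: "'a::comm_ring_1 set"
  assumes R: "is_subring R"
begin

lemma subring_0: "0 \<in> R" and subring_1: "1 \<in> R"
  and subring_add: "x \<in> R \<Longrightarrow> y \<in> R \<Longrightarrow> x + y \<in> R"
  and subring_mult: "x \<in> R \<Longrightarrow> y \<in> R \<Longrightarrow> x * y \<in> R"
  and subring_uminus: "x \<in> R \<Longrightarrow> - x \<in> R"
  using R unfolding is_subring_def by blast+

lemma subring_diff: "x \<in> R \<Longrightarrow> y \<in> R \<Longrightarrow> x - y \<in> R"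
  unfolding diff_conv_add_uminus by (intro subring_add subring_uminus)

lemma subring_sum: "(\<And>i. i \<in> A \<Longrightarrow> f i \<in> R) \<Longrightarrow> sum f A \<in> R"
  by (induction A rule: infinite_finite_induct) (auto intro: subring_0 subring_add)

lemma subring_power: "x \<in> R \<Longrightarrow> x ^ n \<in> R"
  by (induction n) (simp_all add: subring_1 subring_mult)

lemma poly_over_add: "poly_over R p \<Longrightarrow> poly_over R q \<Longrightarrow> poly_over R (p + q)"
  and poly_over_diff: "poly_over R p \<Longrightarrow> poly_over R q \<Longrightarrow> poly_over R (p - q)"
  and poly_over_smult: "c \<in> R \<Longrightarrow> poly_over R p \<Longrightarrow> poly_over R (smult c p)"
  and poly_over_monom: "c \<in> R \<Longrightarrow> poly_over R (monom c n)"
  and poly_over_0: "poly_over R 0"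
  and poly_over_1: "poly_over R 1"
  unfolding poly_over_def
  by (auto simp: coeff_monom coeff_1 intro: subring_add subring_diff subring_mult subring_0 subring_1)

lemma poly_over_const: "c \<in> R \<Longrightarrow> poly_over R [:c:]"
  using poly_over_monom[of c 0] by (simp add: monom_0)

lemma poly_over_mult: "poly_over R p \<Longrightarrow> poly_over R q \<Longrightarrow> poly_over R (p * q)"
  unfolding poly_over_def coeff_mult by (auto intro!: subring_sum subring_mult)

lemma poly_in_adjoin: "poly_over R h \<Longrightarrow> poly h a \<in> adjoin R a"
  unfolding adjoin_def by auto

lemma subring_adjoin: "is_subring (adjoin R a)"
  unfolding is_subring_def
proof (intro conjI ballI)
  show "0 \<in> adjoin R a" "1 \<in> adjoin R a"
    using poly_in_adjoin[OF poly_over_0] poly_in_adjoin[OF poly_over_1] by simp_all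
next
  fix x y assume "x \<in> adjoin R a" "y \<in> adjoin R a"
  then obtain p q where "poly_over R p" "poly_over R q" "x = poly p a" "y = poly q a"
    unfolding adjoin_def by blast
  then show "x + y \<in> adjoin R a" "x * y \<in> adjoin R a" "- x \<in> adjoin R a"
    using poly_in_adjoin[OF poly_over_add] poly_in_adjoin[OF poly_over_mult]
      poly_in_adjoin[OF poly_over_diff[OF poly_over_0]] by (metis poly_add poly_mult poly_diff poly_0 diff_0)+
qed

lemma subset_adjoin: "r \<in> R \<Longrightarrow> r \<in> adjoin R a"
  using poly_in_adjoin[OF poly_over_const] by fastforce

lemma mem_adjoin_self: "a \<in> adjoin R a"
  using poly_in_adjoin[OF poly_over_monom[OF subring_1, of 1]] by (simp add: poly_monom)

end

context
  fixes R I :: "'a::comm_ring_1 set"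
  assumes I: "is_ideal R I"
begin

lemma ideal_0: "0 \<in> I" and ideal_subset: "x \<in> I \<Longrightarrow> x \<in> R"
  and ideal_add: "x \<in> I \<Longrightarrow> y \<in> I \<Longrightarrow> x + y \<in> I"
  and ideal_mult_left: "x \<in> I \<Longrightarrow> r \<in> R \<Longrightarrow> r * x \<in> I"
  using I unfolding is_ideal_def by blast+

lemma ideal_mult_right: "x \<in> I \<Longrightarrow> r \<in> R \<Longrightarrow> x * r \<in> I"
  using ideal_mult_left[of x r] by (simp add: mult.commute)

lemma ideal_sum: "(\<And>i. i \<in> A \<Longrightarrow> f i \<in> I) \<Longrightarrow> sum f A \<in> I"
  by (induction A rule: infinite_finite_induct) (auto intro: ideal_0 ideal_add)

lemma poly_over_ideal_add: "poly_over I p \<Longrightarrow> poly_over I q \<Longrightarrow> poly_over I (p + q)"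
  unfolding poly_over_def by (auto intro: ideal_add)

lemma poly_over_ideal_mult: "poly_over I p \<Longrightarrow> poly_over R q \<Longrightarrow> poly_over I (p * q)"
  unfolding poly_over_def coeff_mult by (auto intro!: ideal_sum ideal_mult_right)

lemma poly_over_ideal_subset: "poly_over I p \<Longrightarrow> poly_over R p"
  unfolding poly_over_def using ideal_subset by blast

context
  assumes R: "is_subring R"
begin

lemma ideal_uminus: "x \<in> I \<Longrightarrow> - x \<in> I"
  using ideal_mult_left[of x "- 1"] subring_uminus[OF R subring_1[OF R]] by simp

lemma ideal_diff: "x \<in> I \<Longrightarrow> y \<in> I \<Longrightarrow> x - y \<in> I"
  unfolding diff_conv_add_uminus by (intro ideal_add ideal_uminus)

end

end

lemma pseudo_divmod_over:
  assumes R: "is_subring R" and g: "poly_over R g" "g \<noteq> 0" and h: "poly_over R h"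
  shows "\<exists>m q r. poly_over R q \<and> poly_over R r \<and> smult (lead_coeff g ^ m) h = q * g + r
    \<and> (r = 0 \<or> degree r < degree g)"
  using h
proof (induction "degree h" arbitrary: h rule: less_induct)
  case less
  show ?case
  proof (cases "h = 0 \<or> degree h < degree g")
    case True
    then show ?thesis
      using less.prems by (intro exI[of _ 0] exI[of _ 0] exI[of _ h]) (auto simp: poly_over_0[OF R])
  next
    case False
    define c where "c = lead_coeff g"
    define lh where "lh = lead_coeff h"
    define s where "s = degree h - degree g"
    define h1 where "h1 = smult c h - monom lh s * g"
    have c: "c \<in> R" and lh: "lh \<in> R"
      using g(1) less.prems unfolding c_def lh_def poly_over_def by auto
    have h1: "poly_over R h1"
      unfolding h1_def using R c lh g(1) less.prems
      by (intro poly_over_diff poly_over_smult poly_over_mult poly_over_monom)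
    have "coeff h1 j = 0" if "j \<ge> degree h" for j
      using that False unfolding h1_def c_def lh_def s_def
      by (cases "j = degree h") (auto simp: coeff_monom_mult coeff_eq_0)
    then have "h1 \<noteq> 0 \<Longrightarrow> degree h1 < degree h"
      by (intro degree_lessI) auto
    then obtain m q r where qr: "poly_over R q" "poly_over R r" "smult (c ^ m) h1 = q * g + r"
      "r = 0 \<or> degree r < degree g"
      using less.hyps[OF _ h1] poly_over_0[OF R] unfolding c_def
      by (cases "h1 = 0") (fastforce intro: exI[of _ 0])+
    have "smult (c ^ Suc m) h = smult (c ^ m) (h1 + monom lh s * g)"
      unfolding h1_def by (simp add: mult.commute)
    also have "\<dots> = (q + smult (c ^ m) (monom lh s)) * g + r"
      using qr(3) by (simp add: smult_add_right algebra_simps)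
    finally have "smult (c ^ Suc m) h = (q + smult (c ^ m) (monom lh s)) * g + r" .
    moreover have "poly_over R (q + smult (c ^ m) (monom lh s))"
      using qr(1) by (simp add: poly_over_add[OF R] poly_over_smult[OF R] poly_over_monom[OF R]
          subring_power[OF R c] lh)
    ultimately show ?thesis
      using qr(2,4) unfolding c_def by blast
  qed
qed

section \<open>Finite residue fields\<close>

context
  fixes R I :: "'a::comm_ring_1 set"
  assumes R: "is_subring R" and I: "finite_residue_field R I"
begin

lemma finite_residue_field_ideal: "is_ideal R I"
  using I unfolding finite_residue_field_def by blast

lemma finite_residue_field_one_notin: "1 \<notin> I"
  using I unfolding finite_residue_field_def by blast

lemma finite_residue_field_inverse: "r \<in> R \<Longrightarrow> r \<notin> I \<Longrightarrow> \<exists>s\<in>R. r * s - 1 \<in> I"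
  using I unfolding finite_residue_field_def by blast

lemma finite_residue_field_prime:
  assumes u: "u \<in> R" "u \<notin> I" and v: "v \<in> R" and uv: "u * v \<in> I"
  shows "v \<in> I"
proof -
  obtain s where s: "s \<in> R" "u * s - 1 \<in> I"
    using finite_residue_field_inverse u by blast
  have "v = s * (u * v) - v * (u * s - 1)"
    by (simp add: algebra_simps)
  also have "\<dots> \<in> I"
    using finite_residue_field_ideal
    by (intro ideal_diff[OF _ R] ideal_mult_left[OF _ uv s(1)] ideal_mult_left[OF _ s(2) v])
  finally show ?thesis .
qed

lemma finite_residue_field_power: "c \<in> R \<Longrightarrow> c \<notin> I \<Longrightarrow> c ^ m \<notin> I"
  by (induction m)
    (use finite_residue_field_one_notin finite_residue_field_prime subring_power[OF R] in auto)

lemma coeff_mult_degree_notin_ideal: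
  assumes G: "poly_over R G" "lead_coeff G \<notin> I" and k: "poly_over R k"
    and m: "coeff k m \<notin> I" "\<And>j. j > m \<Longrightarrow> coeff k j \<in> I"
  shows "coeff (G * k) (degree G + m) \<notin> I"
proof
  define N where "N = degree G"
  have Id: "is_ideal R I"
    by (rule finite_residue_field_ideal)
  assume top: "coeff (G * k) (N + m) \<in> I"
  have "coeff (G * k) (N + m) = coeff G N * coeff k m
      + (\<Sum>i\<in>{..N + m} - {N}. coeff G i * coeff k (N + m - i))"
    unfolding coeff_mult by (subst sum.remove[of _ N]) auto
  moreover have rest: "(\<Sum>i\<in>{..N + m} - {N}. coeff G i * coeff k (N + m - i)) \<in> I"
  proof (intro ideal_sum[OF Id])
    fix i assume i: "i \<in> {..N + m} - {N}"
    show "coeff G i * coeff k (N + m - i) \<in> I"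
    proof (cases "i < N")
      case True
      then show ?thesis
        using m(2)[of "N + m - i"] G(1) ideal_mult_left[OF Id] unfolding poly_over_def by auto
    next
      case False
      with i have "coeff G i = 0"
        unfolding N_def by (auto intro: coeff_eq_0)
      then show ?thesis
        using ideal_0[OF Id] by simp
    qed
  qed
  ultimately have "coeff G N * coeff k m \<in> I"
    using ideal_diff[OF Id R top rest] by simp
  then show False
    using finite_residue_field_prime[of "coeff G N" "coeff k m"] G k m(1)
    unfolding N_def poly_over_def by auto
qed

lemma poly_mult_not_const_mod_ideal:
  assumes G: "poly_over R G" "degree G \<ge> 1" "lead_coeff G \<notin> I" and k: "poly_over R k"
    and c: "c \<notin> I" and const: "poly_over I (G * k - [:c:])"
  shows False
proof -
  have Id: "is_ideal R I"
    by (rule finite_residue_field_ideal)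
  define S where "S = {i. coeff k i \<notin> I}"
  have "S \<noteq> {}"
  proof
    assume "S = {}"
    then have "poly_over I (k * G)"
      using poly_over_ideal_mult[OF Id _ G(1)] unfolding S_def poly_over_def by auto
    moreover have "coeff (G * k - [:c:]) 0 \<in> I"
      using const unfolding poly_over_def by blast
    ultimately have "coeff (G * k) 0 - coeff (G * k - [:c:]) 0 \<in> I"
      by (intro ideal_diff[OF Id R]) (simp_all add: poly_over_def mult.commute)
    with c show False
      by simp
  qed
  moreover have "finite S"
    using ideal_0[OF Id] by (intro finite_subset[of S "{..degree k}"]) (force simp: S_def intro: le_degree)+
  ultimately have "coeff (G * k) (degree G + Max S) \<notin> I"
    using G k Max_in Max_less_iff by (intro coeff_mult_degree_notin_ideal) (auto simp: S_def)
  moreover have "coeff (G * k - [:c:]) (degree G + Max S) \<in> I"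
    using const unfolding poly_over_def by blast
  ultimately show False
    using G(2) by (simp add: coeff_pCons split: nat.splits)
qed

end

lemma finite_index_mono: "finite_index R I \<Longrightarrow> I \<subseteq> J \<Longrightarrow> finite_index R J"
  unfolding finite_index_def by (meson subsetD)

lemma ideal_add_multiples:
  assumes R: "is_subring R" and J: "is_ideal R J" and r: "r \<in> R"
  shows "is_ideal R {j + r * s | j s. j \<in> J \<and> s \<in> R}" (is "is_ideal R ?J'")
  unfolding is_ideal_def
proof (intro conjI ballI subsetI)
  fix x assume "x \<in> ?J'"
  then show "x \<in> R"
    using ideal_subset[OF J] r by (auto intro: subring_add[OF R] subring_mult[OF R])
next
  show "0 \<in> ?J'"
    using ideal_0[OF J] subring_0[OF R] by force
next
  fix x y assume "x \<in> ?J'" "y \<in> ?J'"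
  then obtain j1 s1 j2 s2 where "x = j1 + r * s1" "y = j2 + r * s2" "j1 \<in> J" "j2 \<in> J" "s1 \<in> R" "s2 \<in> R"
    by blast
  moreover have "x + y = (j1 + j2) + r * (s1 + s2)" if "x = j1 + r * s1" "y = j2 + r * s2"
    using that by (simp add: algebra_simps)
  ultimately show "x + y \<in> ?J'"
    using ideal_add[OF J] subring_add[OF R] by blast
next
  fix x q assume "x \<in> ?J'" "q \<in> R"
  then obtain j s where "x = j + r * s" "j \<in> J" "s \<in> R" "q \<in> R"
    by blast
  moreover have "q * x = q * j + r * (q * s)" if "x = j + r * s"
    using that by (simp add: algebra_simps)
  ultimately show "q * x \<in> ?J'"
    using ideal_mult_left[OF J] subring_mult[OF R] by blast
qed

text \<open>Among the proper ideals above \<open>J\<^sub>0\<close>, one containing the most elements of a finite set of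
  representatives of \<open>R / J\<^sub>0\<close> is maximal.\<close>
lemma finite_residue_field_extends:
  assumes R: "is_subring R" and J0: "is_ideal R J0" "1 \<notin> J0" "finite_index R J0"
  shows "\<exists>J. finite_residue_field R J \<and> J0 \<subseteq> J"
proof -
  obtain C where C: "finite C" "C \<subseteq> R" "\<And>r. r \<in> R \<Longrightarrow> \<exists>c\<in>C. r - c \<in> J0"
    using J0(3) unfolding finite_index_def by blast
  define proper where "proper J \<longleftrightarrow> is_ideal R J \<and> J0 \<subseteq> J \<and> 1 \<notin> J" for J
  have "proper J0"
    unfolding proper_def using J0 by blast
  moreover have "\<forall>J. proper J \<longrightarrow> card (C \<inter> J) < Suc (card C)"
    using C(1) by (metis Int_lower1 card_mono le_imp_less_Suc)
  ultimately obtain J where J: "proper J" and J_max: "\<And>J'. proper J' \<Longrightarrow> card (C \<inter> J') \<le> card (C \<inter> J)"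
    using ex_has_greatest_nat[of proper J0 "\<lambda>J. card (C \<inter> J)"] by blast
  then have Jd: "is_ideal R J" "J0 \<subseteq> J" "1 \<notin> J"
    unfolding proper_def by auto
  have "\<exists>s\<in>R. r * s - 1 \<in> J" if r: "r \<in> R" "r \<notin> J" for r
  proof (rule ccontr)
    assume no_inverse: "\<not> (\<exists>s\<in>R. r * s - 1 \<in> J)"
    define J' where "J' = {j + r * s | j s. j \<in> J \<and> s \<in> R}"
    have "J \<subseteq> J'"
      unfolding J'_def using subring_0[OF R] by force
    moreover have "1 \<notin> J'"
    proof
      assume "1 \<in> J'"
      then obtain j s where js: "1 = j + r * s" "j \<in> J" "s \<in> R"
        unfolding J'_def by blast
      then have "r * s - 1 = - j"
        by (simp add: algebra_simps)
      then show False
        using no_inverse ideal_uminus[OF Jd(1) R js(2)] js(3) by auto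
    qed
    ultimately have "card (C \<inter> J') \<le> card (C \<inter> J)"
      using J_max ideal_add_multiples[OF R Jd(1) r(1)] Jd(2) unfolding proper_def J'_def by blast
    moreover obtain c where c: "c \<in> C" "r - c \<in> J"
      using C(3)[OF r(1)] Jd(2) by blast
    have "c \<in> J'"
      using c ideal_uminus[OF Jd(1) R c(2)] subring_1[OF R] unfolding J'_def
      by (intro CollectI exI[of _ "- (r - c)"] exI[of _ 1]) simp
    moreover have "c \<notin> J"
      using ideal_add[OF Jd(1) c(2)] r(2) by force
    ultimately show False
      using \<open>J \<subseteq> J'\<close> c(1) C(1) psubset_card_mono[of "C \<inter> J'" "C \<inter> J"] by auto
  qed
  then have "finite_residue_field R J"
    unfolding finite_residue_field_def using Jd finite_index_mono[OF J0(3) Jd(2)] by blast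
  then show ?thesis
    using Jd(2) by blast
qed

section \<open>Adjoining an element\<close>

lemma min_degree_combination_divides:
  assumes R: "is_subring R" and f: "poly_over R f" and g: "poly_over R g"
    and h: "h = u * f + v * g" "poly_over R u" "poly_over R v" "h \<noteq> 0"
    and h_min: "\<And>u' v'. poly_over R u' \<Longrightarrow> poly_over R v' \<Longrightarrow> u' * f + v' * g \<noteq> 0
      \<Longrightarrow> degree h \<le> degree (u' * f + v' * g)"
    and u'v': "poly_over R u'" "poly_over R v'"
  shows "\<exists>m q. poly_over R q \<and> smult (lead_coeff h ^ m) (u' * f + v' * g) = q * h"
proof -
  define lh where "lh = lead_coeff h"
  have ph: "poly_over R h"
    using h R f g by (simp add: poly_over_add poly_over_mult)
  then have lh: "lh \<in> R"
    unfolding lh_def poly_over_def by blast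
  have "poly_over R (u' * f + v' * g)"
    using R u'v' f g by (simp add: poly_over_add poly_over_mult)
  then obtain m q r where qr: "poly_over R q" "poly_over R r"
      "smult (lh ^ m) (u' * f + v' * g) = q * h + r" "r = 0 \<or> degree r < degree h"
    using pseudo_divmod_over[OF R ph h(4)] unfolding lh_def by blast
  then have "r = smult (lh ^ m) (u' * f + v' * g) - q * h"
    by simp
  also have "\<dots> = (smult (lh ^ m) u' - q * u) * f + (smult (lh ^ m) v' - q * v) * g"
    unfolding h(1) by (simp add: algebra_simps smult_add_right)
  finally have "r = (smult (lh ^ m) u' - q * u) * f + (smult (lh ^ m) v' - q * v) * g" .
  moreover have "poly_over R (smult (lh ^ m) u' - q * u)" "poly_over R (smult (lh ^ m) v' - q * v)"
    by (simp_all add: poly_over_diff[OF R] poly_over_smult[OF R] poly_over_mult[OF R]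
        subring_power[OF R lh] u'v' qr(1) h(2,3))
  ultimately have "r = 0"
    using h_min qr(4) by force
  then show ?thesis
    using qr unfolding lh_def by auto
qed

text \<open>A nonzero combination \<open>u f + v g\<close> of least degree divides \<open>f\<close> and \<open>g\<close> up to constants of \<open>R\<close>;
  minimality of \<open>g\<close> forces it to be a constant.\<close>
lemma algebraic_adjoin_nonzero_divides:
  fixes a :: "'a::idom"
  assumes R: "is_subring R" and f: "poly_over R f" "poly f a \<noteq> 0"
    and g: "poly_over R g" "g \<noteq> 0" "poly g a = 0"
    and g_min: "\<And>h. poly_over R h \<Longrightarrow> h \<noteq> 0 \<Longrightarrow> poly h a = 0 \<Longrightarrow> degree g \<le> degree h"
  shows "\<exists>u e. poly_over R u \<and> e \<in> R \<and> e \<noteq> 0 \<and> poly u a * poly f a = e"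
proof -
  define Comb where "Comb = {h. h \<noteq> 0 \<and> (\<exists>u v. poly_over R u \<and> poly_over R v \<and> h = u * f + v * g)}"
  have "f \<in> Comb"
    unfolding Comb_def using f poly_over_0[OF R] poly_over_1[OF R]
    by (intro CollectI conjI exI[of _ 1] exI[of _ 0]) auto
  then obtain h where h: "h \<in> Comb" and h_min: "\<And>h'. h' \<in> Comb \<Longrightarrow> degree h \<le> degree h'"
    using ex_has_least_nat[of "\<lambda>h. h \<in> Comb" f degree] by blast
  then obtain u v where uv: "poly_over R u" "poly_over R v" "h = u * f + v * g" "h \<noteq> 0"
    unfolding Comb_def by blast
  have divides: "\<exists>m q. poly_over R q \<and> smult (lead_coeff h ^ m) (u' * f + v' * g) = q * h"
    if "poly_over R u'" "poly_over R v'" for u' v'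
    by (rule min_degree_combination_divides[OF R f(1) g(1) uv(3,1,2,4) _ that])
      (auto intro!: h_min simp: Comb_def, blast)
  have ha: "poly h a = poly u a * poly f a"
    using uv(3) g(3) by simp
  show ?thesis
  proof (cases "degree h = 0")
    case True
    then have "h = [:coeff h 0:]"
      by (rule degree_0_id[symmetric])
    moreover have "coeff h 0 \<in> R"
      using uv R f g by (metis poly_over_add poly_over_mult poly_over_def)
    ultimately show ?thesis
      using uv ha by (metis poly_pCons mult_zero_right add_0_right pCons_eq_0_iff poly_0)
  next
    case False
    obtain m1 q1 where "smult (lead_coeff h ^ m1) f = q1 * h"
      using divides[of 1 0] poly_over_0[OF R] poly_over_1[OF R] by auto
    then have "poly h a \<noteq> 0"
      using f(2) uv(4) by (metis poly_smult poly_mult mult_zero_right mult_eq_0_iff power_eq_0_iff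
          leading_coeff_0_iff)
    obtain m2 q2 where q2: "poly_over R q2" "smult (lead_coeff h ^ m2) g = q2 * h"
      using divides[of 0 1] poly_over_0[OF R] poly_over_1[OF R] by auto
    then have "poly q2 a = 0"
      using g(3) \<open>poly h a \<noteq> 0\<close> by (metis poly_smult poly_mult mult_zero_right mult_eq_0_iff)
    moreover have "q2 \<noteq> 0"
      using q2(2) g(2) uv(4) by auto
    moreover have "degree g = degree q2 + degree h"
      using arg_cong[OF q2(2), of degree] \<open>q2 \<noteq> 0\<close> uv(4) by (simp add: degree_mult_eq)
    ultimately show ?thesis
      using g_min[OF q2(1)] False by fastforce
  qed
qed

definition adjoin_ideal :: "'a::comm_ring_1 set \<Rightarrow> 'a set \<Rightarrow> 'a poly \<Rightarrow> 'a \<Rightarrow> 'a set" where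
  "adjoin_ideal R I G a = {poly u a + poly G a * y | u y. poly_over I u \<and> y \<in> adjoin R a}"

context
  fixes R I :: "'a::comm_ring_1 set" and G :: "'a poly" and a :: 'a
  assumes R: "is_subring R" and I: "is_ideal R I" and G: "poly_over R G"
begin

lemma poly_over_ideal_mem_adjoin_ideal: "poly_over I u \<Longrightarrow> poly u a \<in> adjoin_ideal R I G a"
  unfolding adjoin_ideal_def using subring_0[OF subring_adjoin[OF R]] by force

lemma ideal_subset_adjoin_ideal: "x \<in> I \<Longrightarrow> x \<in> adjoin_ideal R I G a"
  using poly_over_ideal_mem_adjoin_ideal[of "[:x:]"] ideal_0[OF I]
  by (simp add: poly_over_def coeff_pCons split: nat.splits)

lemma poly_mem_adjoin_ideal: "poly G a \<in> adjoin_ideal R I G a"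
proof -
  have "poly G a = poly 0 a + poly G a * 1" and "poly_over I 0"
    using ideal_0[OF I] by (simp_all add: poly_over_def)
  then show ?thesis
    unfolding adjoin_ideal_def using subring_1[OF subring_adjoin[OF R]] by blast
qed

lemma is_ideal_adjoin_ideal: "is_ideal (adjoin R a) (adjoin_ideal R I G a)"
  unfolding is_ideal_def
proof (intro conjI ballI subsetI)
  have RA: "is_subring (adjoin R a)"
    by (rule subring_adjoin[OF R])
  fix z assume "z \<in> adjoin_ideal R I G a"
  then obtain u y where "z = poly u a + poly G a * y" "poly_over I u" "y \<in> adjoin R a"
    unfolding adjoin_ideal_def by blast
  then show "z \<in> adjoin R a"
    using poly_in_adjoin[OF R poly_over_ideal_subset[OF I]] poly_in_adjoin[OF R G]
    by (simp add: subring_add[OF RA] subring_mult[OF RA])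
next
  show "0 \<in> adjoin_ideal R I G a"
    using ideal_subset_adjoin_ideal[OF ideal_0[OF I]] .
next
  fix z1 z2 assume "z1 \<in> adjoin_ideal R I G a" "z2 \<in> adjoin_ideal R I G a"
  then obtain u1 y1 u2 y2 where "z1 = poly u1 a + poly G a * y1" "poly_over I u1" "y1 \<in> adjoin R a"
      "z2 = poly u2 a + poly G a * y2" "poly_over I u2" "y2 \<in> adjoin R a"
    unfolding adjoin_ideal_def by blast
  moreover have "z1 + z2 = poly (u1 + u2) a + poly G a * (y1 + y2)"
    if "z1 = poly u1 a + poly G a * y1" "z2 = poly u2 a + poly G a * y2"
    using that by (simp add: algebra_simps)
  ultimately show "z1 + z2 \<in> adjoin_ideal R I G a"
    unfolding adjoin_ideal_def
    using poly_over_ideal_add[OF I] subring_add[OF subring_adjoin[OF R]] by blast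
next
  fix z r assume "z \<in> adjoin_ideal R I G a" "r \<in> adjoin R a"
  then obtain u y k where "z = poly u a + poly G a * y" "poly_over I u" "y \<in> adjoin R a"
      "r = poly k a" "poly_over R k"
    unfolding adjoin_ideal_def adjoin_def by blast
  moreover have "r * z = poly (u * k) a + poly G a * (r * y)"
    if "z = poly u a + poly G a * y" "r = poly k a"
    using that by (simp add: algebra_simps)
  ultimately show "r * z \<in> adjoin_ideal R I G a"
    unfolding adjoin_ideal_def using poly_over_ideal_mult[OF I] subring_mult[OF subring_adjoin[OF R]]
    by (metis (mono_tags, lifting) CollectI \<open>r \<in> adjoin R a\<close>)
qed

end

lemma finite_index_poly_over:
  assumes I: "is_ideal R I" "finite_index R I"
  shows "\<exists>P. finite P \<and> (\<forall>c\<in>P. poly_over R c)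
    \<and> (\<forall>r. poly_over R r \<longrightarrow> (\<forall>i\<ge>n. coeff r i = 0) \<longrightarrow> (\<exists>c\<in>P. poly_over I (r - c)))"
proof -
  obtain C where C: "finite C" "C \<subseteq> R" "\<And>r. r \<in> R \<Longrightarrow> \<exists>c\<in>C. r - c \<in> I"
    using I(2) unfolding finite_index_def by blast
  define P where "P = (\<lambda>c. \<Sum>i<n. monom (c i) i) ` ({..<n} \<rightarrow>\<^sub>E C)"
  have coeff_P: "coeff (\<Sum>i<n. monom (c i) i) j = (if j < n then c j else 0)"
    for c :: "nat \<Rightarrow> 'a" and j
    by (simp add: coeff_sum coeff_monom)
  have "finite P"
    unfolding P_def using C(1) by (simp add: finite_PiE)
  moreover have "\<forall>c\<in>P. poly_over R c"
    unfolding P_def poly_over_def using C(2) ideal_subset[OF I(1)] ideal_0[OF I(1)]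
    by (auto simp: PiE_def Pi_def coeff_P)
  moreover have "\<exists>c\<in>P. poly_over I (r - c)" if r: "poly_over R r" "\<forall>i\<ge>n. coeff r i = 0" for r
  proof -
    have "\<forall>i. \<exists>c\<in>C. coeff r i - c \<in> I"
      using C(3) r(1) unfolding poly_over_def by blast
    then obtain c where c: "\<And>i. c i \<in> C \<and> coeff r i - c i \<in> I"
      by metis
    have "restrict c {..<n} \<in> {..<n} \<rightarrow>\<^sub>E C"
      using c by auto
    moreover have "poly_over I (r - (\<Sum>i<n. monom (restrict c {..<n} i) i))"
      unfolding poly_over_def coeff_diff coeff_P using c r(2) ideal_0[OF I(1)] by auto
    ultimately show ?thesis
      unfolding P_def by blast
  qed
  ultimately show ?thesis
    by blast
qed

text \<open>The monic polynomial \<open>t G + (1 - lead_coeff G t) X\<^sup>n\<close> is congruent to \<open>t G\<close> modulo \<open>I\<close>.\<close>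
lemma monic_mem_adjoin_ideal:
  assumes R: "is_subring R" and I: "is_ideal R I" and G: "poly_over R G"
    and t: "t \<in> R" "lead_coeff G * t - 1 \<in> I"
  shows "\<exists>G1. poly_over R G1 \<and> lead_coeff G1 = 1 \<and> degree G1 = degree G
    \<and> poly G1 a \<in> adjoin_ideal R I G a"
proof -
  define n where "n = degree G"
  define G1 where "G1 = smult t G + monom (1 - lead_coeff G * t) n"
  have G1_coeff: "coeff G1 n = 1" "\<forall>j>n. coeff G1 j = 0"
    unfolding G1_def n_def by (auto simp: coeff_monom coeff_eq_0 algebra_simps)
  then have "degree G1 = n"
    by (intro antisym degree_le le_degree) auto
  have "1 - lead_coeff G * t \<in> I"
    using ideal_uminus[OF I R t(2)] by simp
  then have "poly_over I (monom (1 - lead_coeff G * t) n)"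
    using ideal_0[OF I] unfolding poly_over_def by (simp add: coeff_monom)
  then have "poly (monom (1 - lead_coeff G * t) n) a + poly G a * t \<in> adjoin_ideal R I G a"
    unfolding adjoin_ideal_def using subset_adjoin[OF R t(1)] by blast
  then have "poly G1 a \<in> adjoin_ideal R I G a"
    unfolding G1_def by (simp add: algebra_simps)
  moreover have "poly_over R G1"
    unfolding G1_def using R G t I
    by (intro poly_over_add poly_over_smult poly_over_monom subring_diff subring_1 subring_mult)
      (auto simp: poly_over_def)
  ultimately show ?thesis
    using G1_coeff \<open>degree G1 = n\<close> unfolding n_def by auto
qed

lemma adjoin_ideal_finite_index:
  assumes R: "is_subring R" and I: "is_ideal R I" "finite_index R I" and G: "poly_over R G"
    and t: "t \<in> R" "lead_coeff G * t - 1 \<in> I"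
  shows "finite_index (adjoin R a) (adjoin_ideal R I G a)"
proof -
  define n where "n = degree G"
  obtain G1 where G1: "poly_over R G1" "lead_coeff G1 = 1" "degree G1 = n"
    "poly G1 a \<in> adjoin_ideal R I G a"
    using monic_mem_adjoin_ideal[OF R I(1) G t] unfolding n_def by blast
  then have "G1 \<noteq> 0"
    by auto
  obtain P where P: "finite P" "\<And>c. c \<in> P \<Longrightarrow> poly_over R c"
    "\<And>r. poly_over R r \<Longrightarrow> \<forall>i\<ge>n. coeff r i = 0 \<Longrightarrow> \<exists>c\<in>P. poly_over I (r - c)"
    using finite_index_poly_over[OF I, of n] by blast
  have "\<exists>z\<in>(\<lambda>c. poly c a) ` P. x - z \<in> adjoin_ideal R I G a" if "x \<in> adjoin R a" for x
  proof -
    obtain h where h: "poly_over R h" "x = poly h a"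
      using \<open>x \<in> adjoin R a\<close> unfolding adjoin_def by blast
    obtain m q r where qr: "poly_over R q" "poly_over R r" "h = q * G1 + r" "r = 0 \<or> degree r < n"
      using pseudo_divmod_over[OF R G1(1) \<open>G1 \<noteq> 0\<close> h(1)] G1(2,3) by auto
    have "\<forall>i\<ge>n. coeff r i = 0"
      using qr(4) by (auto simp: coeff_eq_0)
    then obtain c where c: "c \<in> P" "poly_over I (r - c)"
      using P(3)[OF qr(2)] by blast
    have "x - poly c a = poly q a * poly G1 a + poly (r - c) a"
      using h(2) qr(3) by simp
    also have "\<dots> \<in> adjoin_ideal R I G a"
      using is_ideal_adjoin_ideal[OF R I(1) G] poly_over_ideal_mem_adjoin_ideal[OF R I(1) G c(2)]
        ideal_mult_left[OF _ G1(4) poly_in_adjoin[OF R qr(1)]] ideal_add by blast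
    finally show ?thesis
      using c(1) by blast
  qed
  moreover have "(\<lambda>c. poly c a) ` P \<subseteq> adjoin R a"
    using P(2) poly_in_adjoin[OF R] by blast
  ultimately show ?thesis
    unfolding finite_index_def using P(1) by blast
qed

lemma finite_residue_field_above_adjoin_ideal:
  assumes R: "is_subring R" and I: "finite_residue_field R I" and G: "poly_over R G"
    and t: "t \<in> R" "lead_coeff G * t - 1 \<in> I" and proper: "1 \<notin> adjoin_ideal R I G a"
  shows "\<exists>J. finite_residue_field (adjoin R a) J \<and> adjoin_ideal R I G a \<subseteq> J"
proof -
  have I': "is_ideal R I" "finite_index R I"
    using I unfolding finite_residue_field_def by auto
  show ?thesis
    by (rule finite_residue_field_extends[OF subring_adjoin[OF R] is_ideal_adjoin_ideal[OF R I'(1) G]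
          proper adjoin_ideal_finite_index[OF R I' G t]])
qed

lemma one_notin_adjoin_ideal_transcendental:
  assumes R: "is_subring R" and I: "finite_residue_field R I"
    and transcendental: "\<And>h. poly_over R h \<Longrightarrow> poly h a = 0 \<Longrightarrow> h = 0"
    and G: "poly_over R G" "degree G \<noteq> 0" "lead_coeff G \<notin> I"
  shows "1 \<notin> adjoin_ideal R I G a"
proof
  have Id: "is_ideal R I"
    by (rule finite_residue_field_ideal[OF R I])
  assume "1 \<in> adjoin_ideal R I G a"
  then obtain u k where uk: "1 = poly u a + poly G a * poly k a" "poly_over I u" "poly_over R k"
    unfolding adjoin_ideal_def adjoin_def by blast
  have "poly_over R (G * k - [:1:] + u)"
    using R G(1) uk(3) poly_over_ideal_subset[OF Id uk(2)]
    by (intro poly_over_add poly_over_diff poly_over_mult poly_over_const subring_1)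
  moreover have "poly (G * k - [:1:] + u) a = (poly u a + poly G a * poly k a) - 1"
    by (simp add: algebra_simps)
  then have "poly (G * k - [:1:] + u) a = 0"
    using uk(1) by simp
  ultimately have "G * k - [:1:] = - u"
    using transcendental by (simp add: eq_neg_iff_add_eq_0)
  moreover have "poly_over I (- u)"
    using uk(2) ideal_uminus[OF Id R] unfolding poly_over_def by simp
  ultimately show False
    using poly_mult_not_const_mod_ideal[OF R I G(1) _ G(3) uk(3), where c = 1]
      finite_residue_field_one_notin[OF R I] G(2) by auto
qed

lemma separated_adjoin_transcendental:
  assumes R: "is_subring R" "separated_by_finite_fields R"
    and transcendental: "\<And>h. poly_over R h \<Longrightarrow> poly h a = 0 \<Longrightarrow> h = 0"
    and f: "poly_over R f" "poly f a \<noteq> 0"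
  shows "\<exists>J. finite_residue_field (adjoin R a) J \<and> poly f a \<notin> J"
proof -
  have lead_f: "lead_coeff f \<in> R" "lead_coeff f \<noteq> 0"
    using f unfolding poly_over_def by auto
  then obtain I where I: "finite_residue_field R I" "lead_coeff f \<notin> I"
    using R(2) unfolding separated_by_finite_fields_def by blast
  have Id: "is_ideal R I"
    by (rule finite_residue_field_ideal[OF R(1) I(1)])
  obtain t where t: "t \<in> R" "lead_coeff f * t - 1 \<in> I"
    using finite_residue_field_inverse[OF R(1) I(1) lead_f(1) I(2)] by blast
  define G where "G = monom t 1 * f - 1"
  \<comment> \<open>\<open>f(a)\<close> is a unit modulo \<open>G(a)\<close>, while \<open>lead_coeff G \<equiv> 1\<close> modulo \<open>I\<close>\<close>
  have G: "poly_over R G"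
    unfolding G_def using R(1) t(1) f(1) by (intro poly_over_diff poly_over_mult poly_over_monom poly_over_1)
  have "t * lead_coeff f \<noteq> 0"
    using t(2) finite_residue_field_one_notin[OF R(1) I(1)] ideal_uminus[OF Id R(1)] by (force simp: mult.commute)
  moreover have top: "coeff G (degree f + 1) = t * lead_coeff f"
    unfolding G_def by (simp add: coeff_monom_mult)
  moreover have "coeff G j = 0" if "j > degree f + 1" for j
    using that unfolding G_def by (simp add: coeff_monom_mult coeff_eq_0)
  ultimately have deg_G: "degree G = degree f + 1"
    by (intro antisym degree_le le_degree) auto
  then have lead_G: "lead_coeff G = lead_coeff f * t"
    using top by (simp add: mult.commute)
  have "lead_coeff G \<notin> I"
    using ideal_diff[OF Id R(1) _ t(2)] finite_residue_field_one_notin[OF R(1) I(1)] unfolding lead_G by force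
  have proper: "1 \<notin> adjoin_ideal R I G a"
    using one_notin_adjoin_ideal_transcendental[OF R(1) I(1) transcendental G] deg_G
      \<open>lead_coeff G \<notin> I\<close> by simp
  obtain J where J: "finite_residue_field (adjoin R a) J" "adjoin_ideal R I G a \<subseteq> J"
    using finite_residue_field_above_adjoin_ideal[OF R(1) I(1) G subring_1[OF R(1)] _ proper]
      t(2) lead_G by auto
  have "poly f a \<notin> J"
  proof
    have JA: "is_ideal (adjoin R a) J"
      by (rule finite_residue_field_ideal[OF subring_adjoin[OF R(1)] J(1)])
    assume "poly f a \<in> J"
    then have "poly f a * (a * t) - poly G a \<in> J"
      using J(2) poly_mem_adjoin_ideal[OF R(1) Id G]
        subring_mult[OF subring_adjoin[OF R(1)] mem_adjoin_self[OF R(1)] subset_adjoin[OF R(1) t(1)]]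
      by (intro ideal_diff[OF JA subring_adjoin[OF R(1)]] ideal_mult_right[OF JA]) auto
    moreover have "poly f a * (a * t) - poly G a = 1"
      unfolding G_def by (simp add: poly_monom algebra_simps)
    ultimately show False
      using finite_residue_field_one_notin[OF subring_adjoin[OF R(1)] J(1)] by simp
  qed
  then show ?thesis
    using J(1) by blast
qed

lemma one_notin_adjoin_ideal_min_poly:
  assumes R: "is_subring R" and I: "finite_residue_field R I"
    and g: "poly_over R g" "g \<noteq> 0" "poly g a = 0" "lead_coeff g \<notin> I"
    and g_min: "\<And>h. poly_over R h \<Longrightarrow> h \<noteq> 0 \<Longrightarrow> poly h a = 0 \<Longrightarrow> degree g \<le> degree h"
  shows "1 \<notin> adjoin_ideal R I g a"
proof
  have Id: "is_ideal R I"
    by (rule finite_residue_field_ideal[OF R I])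
  have "degree g \<noteq> 0"
    using poly_zero[OF g(3)] g(2) by simp
  assume "1 \<in> adjoin_ideal R I g a"
  then obtain u y where uy: "1 = poly u a + poly g a * y" "poly_over I u"
    unfolding adjoin_ideal_def by blast
  have "poly_over R (1 - u)"
    using poly_over_diff[OF R poly_over_1[OF R] poly_over_ideal_subset[OF Id uy(2)]] .
  then obtain m q r where qr: "poly_over R q" "poly_over R r"
      "smult (lead_coeff g ^ m) (1 - u) = q * g + r" "r = 0 \<or> degree r < degree g"
    using pseudo_divmod_over[OF R g(1,2)] by blast
  have "poly r a = 0"
    using arg_cong[OF qr(3), of "\<lambda>p. poly p a"] uy(1) g(3) by simp
  then have "r = 0"
    using g_min[OF qr(2)] qr(4) by force
  then have "g * q - [:lead_coeff g ^ m:] = - smult (lead_coeff g ^ m) u"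
    using qr(3) by (simp add: algebra_simps smult_diff_right)
  moreover have "poly_over I (- smult (lead_coeff g ^ m) u)"
    using uy(2) g(1) ideal_uminus[OF Id R] ideal_mult_left[OF Id] subring_power[OF R]
    unfolding poly_over_def by simp
  moreover have "lead_coeff g ^ m \<notin> I"
    using finite_residue_field_power[OF R I _ g(4)] g(1) unfolding poly_over_def by blast
  ultimately show False
    using poly_mult_not_const_mod_ideal[OF R I g(1) _ g(4) qr(1), where c = "lead_coeff g ^ m"]
      \<open>degree g \<noteq> 0\<close> by auto
qed

lemma separated_adjoin_algebraic:
  fixes a :: "'a::idom"
  assumes R: "is_subring R" "separated_by_finite_fields R"
    and g: "poly_over R g" "g \<noteq> 0" "poly g a = 0"
    and g_min: "\<And>h. poly_over R h \<Longrightarrow> h \<noteq> 0 \<Longrightarrow> poly h a = 0 \<Longrightarrow> degree g \<le> degree h"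
    and f: "poly_over R f" "poly f a \<noteq> 0"
  shows "\<exists>J. finite_residue_field (adjoin R a) J \<and> poly f a \<notin> J"
proof -
  obtain u e where ue: "poly_over R u" "e \<in> R" "e \<noteq> 0" "poly u a * poly f a = e"
    using algebraic_adjoin_nonzero_divides[OF R(1) f g g_min] by blast
  define c where "c = lead_coeff g"
  have c: "c \<in> R" "c \<noteq> 0"
    using g(1,2) unfolding c_def poly_over_def by auto
  then have "c * e \<in> R" "c * e \<noteq> 0"
    using subring_mult[OF R(1) c(1) ue(2)] ue(3) by auto
  then obtain I where I: "finite_residue_field R I" "c * e \<notin> I"
    \<comment> \<open>\<open>c\<close> must be a unit modulo \<open>I\<close> for finite index, and \<open>e\<close> must survive modulo \<open>I\<close>\<close>
    using R(2) unfolding separated_by_finite_fields_def by blast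
  have Id: "is_ideal R I"
    by (rule finite_residue_field_ideal[OF R(1) I(1)])
  have "c \<notin> I" "e \<notin> I"
    using I(2) ideal_mult_right[OF Id _ ue(2)] ideal_mult_left[OF Id _ c(1)] by auto
  obtain t where t: "t \<in> R" "c * t - 1 \<in> I"
    using finite_residue_field_inverse[OF R(1) I(1) c(1) \<open>c \<notin> I\<close>] by blast
  obtain J where J: "finite_residue_field (adjoin R a) J" "adjoin_ideal R I g a \<subseteq> J"
    using finite_residue_field_above_adjoin_ideal[OF R(1) I(1) g(1) t[unfolded c_def]]
      one_notin_adjoin_ideal_min_poly[OF R(1) I(1) g \<open>c \<notin> I\<close>[unfolded c_def] g_min] by blast
  have "poly f a \<notin> J"
  proof
    have RA: "is_subring (adjoin R a)" and JA: "is_ideal (adjoin R a) J"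
      using subring_adjoin[OF R(1)] finite_residue_field_ideal[OF subring_adjoin[OF R(1)] J(1)] by auto
    obtain s where s: "s \<in> R" "e * s - 1 \<in> I"
      using finite_residue_field_inverse[OF R(1) I(1) ue(2) \<open>e \<notin> I\<close>] by blast
    assume "poly f a \<in> J"
    then have "e \<in> J"
      using ideal_mult_left[OF JA _ poly_in_adjoin[OF R(1) ue(1)]] ue(4) by force
    then have "e * s \<in> J"
      using ideal_mult_right[OF JA _ subset_adjoin[OF R(1) s(1)]] by blast
    moreover have "e * s - 1 \<in> J"
      using J(2) ideal_subset_adjoin_ideal[OF R(1) Id g(1) s(2)] by blast
    ultimately have "e * s - (e * s - 1) \<in> J"
      by (rule ideal_diff[OF JA RA])
    then show False
      using finite_residue_field_one_notin[OF RA J(1)] by simp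
  qed
  then show ?thesis
    using J(1) by blast
qed

lemma separated_adjoin:
  fixes a :: "'a::idom"
  assumes R: "is_subring R" "separated_by_finite_fields R"
  shows "separated_by_finite_fields (adjoin R a)"
  unfolding separated_by_finite_fields_def
proof (intro ballI impI)
  fix x assume "x \<in> adjoin R a" "x \<noteq> 0"
  then obtain f where f: "poly_over R f" "poly f a \<noteq> 0" "x = poly f a"
    unfolding adjoin_def by blast
  show "\<exists>J. finite_residue_field (adjoin R a) J \<and> x \<notin> J"
  proof (cases "\<exists>h. poly_over R h \<and> h \<noteq> 0 \<and> poly h a = 0")
    case True
    then obtain g where "poly_over R g \<and> g \<noteq> 0 \<and> poly g a = 0"
      and "\<And>h. poly_over R h \<and> h \<noteq> 0 \<and> poly h a = 0 \<Longrightarrow> degree g \<le> degree h"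
      using ex_has_least_nat[of "\<lambda>h. poly_over R h \<and> h \<noteq> 0 \<and> poly h a = 0" _ degree] by metis
    then show ?thesis
      using separated_adjoin_algebraic[OF R, of g] f by blast
  next
    case False
    then show ?thesis
      using separated_adjoin_transcendental[OF R _ f(1,2)] f(3) by blast
  qed
qed

section \<open>Finitely generated subrings\<close>

lemma subring_range_of_int: "is_subring (range of_int)"
  unfolding is_subring_def
  by (auto simp: image_iff) (metis of_int_add of_int_mult of_int_minus of_int_0 of_int_1)+

lemma finite_residue_field_of_int_multiples:
  fixes q :: nat
  assumes q: "Factorial_Ring.prime q" and proper: "(1 :: 'a::comm_ring_1) \<notin> of_int ` {k. int q dvd k}"
  shows "finite_residue_field (range (of_int :: int \<Rightarrow> 'a)) (of_int ` {k. int q dvd k})"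
  unfolding finite_residue_field_def
proof (intro conjI ballI impI proper)
  show "is_ideal (range of_int) (of_int ` {k. int q dvd k} :: 'a set)"
    unfolding is_ideal_def by (auto simp: image_iff) (metis dvd_add of_int_add, metis dvd_mult of_int_mult)
  have "\<exists>c\<in>of_int ` {0..<int q}. r - c \<in> of_int ` {k. int q dvd k}" if r: "r \<in> range of_int"
    for r :: 'a
  proof -
    obtain k where "r = of_int k"
      using r by blast
    then have "r - of_int (k mod int q) = of_int (int q * (k div int q))"
      by (simp add: minus_mod_eq_mult_div [symmetric])
    then have "r - of_int (k mod int q) \<in> of_int ` {k. int q dvd k}"
      by (intro image_eqI[of _ _ "int q * (k div int q)"]) auto
    moreover have "of_int (k mod int q) \<in> (of_int ` {0..<int q} :: 'a set)"
      using prime_gt_0_nat[OF q] by simp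
    ultimately show ?thesis
      by blast
  qed
  then show "finite_index (range of_int) (of_int ` {k. int q dvd k} :: 'a set)"
    unfolding finite_index_def by (intro exI[of _ "of_int ` {0..<int q}"]) auto
next
  fix r :: 'a assume "r \<in> range of_int" "r \<notin> of_int ` {k. int q dvd k}"
  then obtain k where k: "r = of_int k" "\<not> int q dvd k"
    by blast
  then have "coprime k (int q)"
    using prime_imp_coprime[of "int q" k] q by (simp add: coprime_commute)
  then obtain s v where "s * k + v * int q = 1"
    using bezout_int[of k "int q"] by (auto simp: coprime_iff_gcd_eq_1)
  then have "k * s - 1 = int q * (- v)"
    by (simp add: algebra_simps)
  then have "r * of_int s - 1 = of_int (int q * (- v))"
    unfolding k(1) by (metis of_int_1 of_int_diff of_int_mult)
  moreover have "of_int (int q * (- v)) \<in> (of_int ` {k. int q dvd k} :: 'a set)"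
    by (intro imageI) simp
  ultimately show "\<exists>s\<in>range of_int. r * s - 1 \<in> of_int ` {k. int q dvd k}"
    by (metis rangeI)
qed

lemma of_int_mem_multiples_iff:
  fixes q :: nat
  assumes "CHAR('a::comm_ring_1) = 0 \<or> CHAR('a) = q"
  shows "(of_int m :: 'a) \<in> of_int ` {k. int q dvd k} \<longleftrightarrow> int q dvd m"
proof
  assume "(of_int m :: 'a) \<in> of_int ` {k. int q dvd k}"
  then obtain k where k: "int q dvd k" "of_int k = (of_int m :: 'a)"
    by auto
  then have "of_int (k - m) = (0 :: 'a)"
    by simp
  then have char_dvd: "int CHAR('a) dvd k - m"
    by (simp only: of_int_eq_0_iff_char_dvd)
  from assms show "int q dvd m"
  proof
    assume "CHAR('a) = 0"
    then show ?thesis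
      using char_dvd k(1) by simp
  next
    assume "CHAR('a) = q"
    then show ?thesis
      using char_dvd dvd_diff[OF k(1), of "k - m"] by simp
  qed
qed auto

lemma separated_range_of_int: "separated_by_finite_fields (range (of_int :: int \<Rightarrow> 'a::idom))"
  unfolding separated_by_finite_fields_def
proof (intro ballI impI)
  fix x :: 'a assume "x \<in> range of_int" "x \<noteq> 0"
  then obtain m where m: "x = of_int m" "m \<noteq> 0"
    by (metis of_int_0 rangeE)
  obtain q where q: "Factorial_Ring.prime q" "CHAR('a) = 0 \<or> CHAR('a) = q" "\<not> int q dvd m"
  proof (cases "CHAR('a) = 0")
    case True
    obtain q where "Factorial_Ring.prime q" "nat \<bar>m\<bar> < q"
      using bigger_prime by blast
    with m(2) True show thesis
      by (intro that[of q]) (auto dest: dvd_imp_le_int)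
  next
    case False
    with m \<open>x \<noteq> 0\<close> show thesis
      by (intro that[of "CHAR('a)"]) (auto intro: prime_CHAR_semidom simp: of_int_eq_0_iff_char_dvd)
  qed
  then have "1 \<notin> (of_int ` {k. int q dvd k} :: 'a set)" "x \<notin> of_int ` {k. int q dvd k}"
    using of_int_mem_multiples_iff[OF q(2), of 1] of_int_mem_multiples_iff[OF q(2), of m] m(1)
      prime_gt_1_nat[OF q(1)] by (auto simp: zdvd1_eq)
  then show "\<exists>I. finite_residue_field (range of_int) I \<and> x \<notin> I"
    using finite_residue_field_of_int_multiples[OF q(1)] by blast
qed

lemma finitely_generated_subring_separated:
  fixes E :: "'a::idom set"
  assumes "finite E"
  shows "\<exists>R. is_subring R \<and> separated_by_finite_fields R \<and> E \<subseteq> R"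
  using assms
proof (induction E rule: finite_induct)
  case empty
  show ?case
    using subring_range_of_int separated_range_of_int by blast
next
  case (insert a E)
  then obtain R where "is_subring R" "separated_by_finite_fields R" "E \<subseteq> R"
    by blast
  then show ?case
    using subring_adjoin separated_adjoin mem_adjoin_self subset_adjoin
    by (intro exI[of _ "adjoin R a"]) blast
qed

section \<open>Level matrices of elements of \<open>GL_rec\<close>\<close>

lemma GL_rec_carrier: "carrier (GL_rec p) = Units (Rec_monoid p)"
  unfolding GL_rec_def units_of_def by simp

lemma GL_rec_mult: "x \<otimes>\<^bsub>GL_rec p\<^esub> y = rec_mult p x y"
  unfolding GL_rec_def units_of_def Rec_monoid_def by simp

lemma GL_rec_one: "\<one>\<^bsub>GL_rec p\<^esub> = rec_id p"
  unfolding GL_rec_def units_of_def Rec_monoid_def by simp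

lemma valid_pair_words: "U \<in> words p l \<Longrightarrow> V \<in> words p l \<Longrightarrow> valid_pair p U V"
  unfolding words_def valid_pair_def by auto

lemma words_valid_pair: "valid_pair p U W \<Longrightarrow> U \<in> words p (length U) \<and> W \<in> words p (length U)"
  unfolding words_def valid_pair_def by auto

lemma finite_words: "finite (words p l)"
  using finite_lists_length_eq[of "{..<p}" l] unfolding words_def by (simp add: conj_commute)

lemma rec_mult_eq_sum:
  "U \<in> words p l \<Longrightarrow> W \<in> words p l \<Longrightarrow> rec_mult p A B U W = (\<Sum>V\<in>words p l. A U V * B V W)"
  unfolding rec_mult_def using valid_pair_words[of U p l W] by (simp add: words_def)

lemma rec_mult_assoc: "rec_mult p (rec_mult p A B) C = rec_mult p A (rec_mult p B C)"
proof (intro ext)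
  fix U W
  show "rec_mult p (rec_mult p A B) C U W = rec_mult p A (rec_mult p B C) U W"
  proof (cases "valid_pair p U W")
    case True
    define l where "l = length U"
    have UW: "U \<in> words p l" "W \<in> words p l"
      using words_valid_pair[OF True] unfolding l_def by auto
    have "rec_mult p (rec_mult p A B) C U W
        = (\<Sum>V\<in>words p l. \<Sum>V'\<in>words p l. A U V' * B V' V * C V W)"
      using UW by (simp add: rec_mult_eq_sum sum_distrib_right)
    also have "\<dots> = (\<Sum>V'\<in>words p l. A U V' * (\<Sum>V\<in>words p l. B V' V * C V W))"
      by (subst sum.swap) (simp add: sum_distrib_left mult.assoc)
    also have "\<dots> = rec_mult p A (rec_mult p B C) U W"
      using UW by (simp add: rec_mult_eq_sum)
    finally show ?thesis .
  qed (simp add: rec_mult_def)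
qed

lemma rec_mult_id_left:
  assumes "is_pseries p A"
  shows "rec_mult p (rec_id p) A = A"
proof (intro ext)
  fix U W
  show "rec_mult p (rec_id p) A U W = A U W"
  proof (cases "valid_pair p U W")
    case True
    then have UW: "U \<in> words p (length U)" "W \<in> words p (length U)"
      by (simp_all add: words_valid_pair)
    then have "rec_mult p (rec_id p) A U W = (\<Sum>V\<in>words p (length U). if V = U then A V W else 0)"
      by (auto simp: rec_mult_eq_sum rec_id_def valid_pair_words intro!: sum.cong)
    also have "\<dots> = A U W"
      using UW by (simp add: finite_words)
    finally show ?thesis .
  qed (use assms in \<open>simp add: rec_mult_def is_pseries_def\<close>)
qed

lemma rec_mult_id_right:
  assumes "is_pseries p A"
  shows "rec_mult p A (rec_id p) = A"
proof (intro ext)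
  fix U W
  show "rec_mult p A (rec_id p) U W = A U W"
  proof (cases "valid_pair p U W")
    case True
    then have UW: "U \<in> words p (length U)" "W \<in> words p (length U)"
      by (simp_all add: words_valid_pair)
    then have "rec_mult p A (rec_id p) U W = (\<Sum>V\<in>words p (length U). if V = W then A U V else 0)"
      by (auto simp: rec_mult_eq_sum rec_id_def valid_pair_words intro!: sum.cong)
    also have "\<dots> = A U W"
      using UW by (simp add: finite_words)
    finally show ?thesis .
  qed (use assms in \<open>simp add: rec_mult_def is_pseries_def\<close>)
qed

lemma GL_rec_pseries: "A \<in> carrier (GL_rec p) \<Longrightarrow> is_pseries p A"
  unfolding GL_rec_carrier Units_def Rec_monoid_def recognizable_def by simp

text \<open>\<open>Rec_monoid p\<close> is not known to be a monoid here (products of recognizable series are not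
  shown to be recognizable), so the uniqueness of inverses is derived directly.\<close>
lemma GL_rec_inv:
  assumes A: "A \<in> carrier (GL_rec p)"
  shows "inv\<^bsub>GL_rec p\<^esub> A \<in> carrier (GL_rec p)" "rec_mult p (inv\<^bsub>GL_rec p\<^esub> A) A = rec_id p"
    "rec_mult p A (inv\<^bsub>GL_rec p\<^esub> A) = rec_id p"
proof -
  obtain B where B: "B \<in> carrier (Rec_monoid p)" "rec_mult p B A = rec_id p" "rec_mult p A B = rec_id p"
    using A unfolding GL_rec_carrier Units_def Rec_monoid_def by auto
  have B_unit: "B \<in> carrier (GL_rec p)"
    using A B unfolding GL_rec_carrier Units_def Rec_monoid_def by auto
  have unique: "y = B" if "y \<in> carrier (GL_rec p)" "rec_mult p y A = rec_id p" for y
  proof -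
    have "y = rec_mult p y (rec_mult p A B)"
      using rec_mult_id_right[OF GL_rec_pseries[OF that(1)]] B(3) by simp
    also have "\<dots> = B"
      using rec_mult_id_left[OF GL_rec_pseries[OF B_unit]] that(2) by (simp add: rec_mult_assoc[symmetric])
    finally show ?thesis .
  qed
  have "inv\<^bsub>GL_rec p\<^esub> A = B"
    unfolding m_inv_def GL_rec_mult GL_rec_one
  proof (rule the_equality)
    show "B \<in> carrier (GL_rec p) \<and> rec_mult p A B = rec_id p \<and> rec_mult p B A = rec_id p"
      using B B_unit by blast
  qed (use unique in blast)
  then show "inv\<^bsub>GL_rec p\<^esub> A \<in> carrier (GL_rec p)" "rec_mult p (inv\<^bsub>GL_rec p\<^esub> A) A = rec_id p"
    "rec_mult p A (inv\<^bsub>GL_rec p\<^esub> A) = rec_id p"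
    using B B_unit by simp_all
qed

lemma GL_rec_ne_one_entry:
  assumes "A \<in> carrier (GL_rec p)" "A \<noteq> \<one>\<^bsub>GL_rec p\<^esub>"
  shows "\<exists>l U V. U \<in> words p l \<and> V \<in> words p l \<and> A U V \<noteq> (if U = V then 1 else 0)"
proof -
  obtain U V where UV: "A U V \<noteq> rec_id p U V"
    using assms(2) unfolding GL_rec_one by (meson ext)
  then have "valid_pair p U V"
    using GL_rec_pseries[OF assms(1)] unfolding is_pseries_def rec_id_def by metis
  then show ?thesis
    using UV words_valid_pair[of p U V] unfolding rec_id_def
    by (intro exI[of _ "length U"] exI[of _ U] exI[of _ V]) auto
qed

section \<open>Reduction of a level modulo an ideal\<close>

text \<open>Vectors over
  \<open>R / I\<close> indexed by \<open>words p l\<close> are represented by residue classes of \<open>R\<close>-valued vectors.\<close>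

definition level_vectors :: "nat \<Rightarrow> nat \<Rightarrow> 'a::comm_ring_1 set \<Rightarrow> (nat list \<Rightarrow> 'a) set" where
  "level_vectors p l R = {v. (\<forall>U\<in>words p l. v U \<in> R) \<and> (\<forall>U. U \<notin> words p l \<longrightarrow> v U = 0)}"

definition mat_vec :: "nat \<Rightarrow> nat \<Rightarrow> (nat list \<Rightarrow> nat list \<Rightarrow> 'a::comm_ring_1) \<Rightarrow> (nat list \<Rightarrow> 'a) \<Rightarrow> nat list \<Rightarrow> 'a"
  where "mat_vec p l A v = (\<lambda>U. if U \<in> words p l then (\<Sum>V\<in>words p l. A U V * v V) else 0)"

definition cong_mod :: "nat \<Rightarrow> nat \<Rightarrow> 'a::comm_ring_1 set \<Rightarrow> (nat list \<Rightarrow> 'a) \<Rightarrow> (nat list \<Rightarrow> 'a) \<Rightarrow> bool" where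
  "cong_mod p l I v w \<longleftrightarrow> (\<forall>U\<in>words p l. v U - w U \<in> I)"

definition residue_class :: "nat \<Rightarrow> nat \<Rightarrow> 'a::comm_ring_1 set \<Rightarrow> 'a set \<Rightarrow> (nat list \<Rightarrow> 'a) \<Rightarrow> (nat list \<Rightarrow> 'a) set"
  where "residue_class p l R I v = {w \<in> level_vectors p l R. cong_mod p l I v w}"

definition residue_classes :: "nat \<Rightarrow> nat \<Rightarrow> 'a::comm_ring_1 set \<Rightarrow> 'a set \<Rightarrow> (nat list \<Rightarrow> 'a) set set" where
  "residue_classes p l R I = residue_class p l R I ` level_vectors p l R"

definition class_action :: "nat \<Rightarrow> nat \<Rightarrow> 'a::comm_ring_1 set \<Rightarrow> 'a set \<Rightarrow> (nat list \<Rightarrow> nat list \<Rightarrow> 'a)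
    \<Rightarrow> (nat list \<Rightarrow> 'a) set \<Rightarrow> (nat list \<Rightarrow> 'a) set" where
  "class_action p l R I A Q = {w \<in> level_vectors p l R. \<exists>v\<in>Q. cong_mod p l I (mat_vec p l A v) w}"

definition entries_in :: "nat \<Rightarrow> nat \<Rightarrow> 'a set \<Rightarrow> (nat list \<Rightarrow> nat list \<Rightarrow> 'a) \<Rightarrow> bool" where
  "entries_in p l R A \<longleftrightarrow> (\<forall>U\<in>words p l. \<forall>V\<in>words p l. A U V \<in> R)"

lemma entries_in_rec_mult:
  "is_subring R \<Longrightarrow> entries_in p l R A \<Longrightarrow> entries_in p l R B \<Longrightarrow> entries_in p l R (rec_mult p A B)"
  unfolding entries_in_def by (auto simp: rec_mult_eq_sum intro!: subring_sum subring_mult)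

lemma entries_in_rec_id: "is_subring R \<Longrightarrow> entries_in p l R (rec_id p)"
  unfolding entries_in_def rec_id_def by (auto intro: subring_0 subring_1)

lemma mat_vec_rec_mult:
  "mat_vec p l (rec_mult p A B) v = mat_vec p l A (mat_vec p l B v)"
proof
  fix U
  show "mat_vec p l (rec_mult p A B) v U = mat_vec p l A (mat_vec p l B v) U"
  proof (cases "U \<in> words p l")
    case True
    have "mat_vec p l (rec_mult p A B) v U = (\<Sum>W\<in>words p l. \<Sum>V\<in>words p l. A U V * B V W * v W)"
      using True unfolding mat_vec_def by (simp add: rec_mult_eq_sum sum_distrib_right)
    also have "\<dots> = (\<Sum>V\<in>words p l. A U V * (\<Sum>W\<in>words p l. B V W * v W))"
      by (subst sum.swap) (simp add: sum_distrib_left mult.assoc)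
    also have "\<dots> = mat_vec p l A (mat_vec p l B v) U"
      using True unfolding mat_vec_def by simp
    finally show ?thesis .
  qed (simp add: mat_vec_def)
qed

lemma mat_vec_rec_id:
  assumes "v \<in> level_vectors p l R"
  shows "mat_vec p l (rec_id p) v = v"
proof
  fix U
  show "mat_vec p l (rec_id p) v U = v U"
  proof (cases "U \<in> words p l")
    case True
    then have "mat_vec p l (rec_id p) v U = (\<Sum>V\<in>words p l. if V = U then v V else 0)"
      unfolding mat_vec_def by (auto simp: rec_id_def valid_pair_words intro!: sum.cong)
    also have "\<dots> = v U"
      using True by (simp add: finite_words)
    finally show ?thesis .
  qed (use assms in \<open>simp add: mat_vec_def level_vectors_def\<close>)
qed

context
  fixes p l :: nat and R I :: "'a::comm_ring_1 set"
  assumes R: "is_subring R" and I: "is_ideal R I"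
begin

lemma cong_mod_refl: "cong_mod p l I v v"
  unfolding cong_mod_def using ideal_0[OF I] by simp

lemma cong_mod_sym: "cong_mod p l I v w \<Longrightarrow> cong_mod p l I w v"
  unfolding cong_mod_def using ideal_uminus[OF I R] by (metis minus_diff_eq)

lemma cong_mod_trans:
  assumes "cong_mod p l I u v" "cong_mod p l I v w"
  shows "cong_mod p l I u w"
  unfolding cong_mod_def
proof
  fix U assume "U \<in> words p l"
  then have "(u U - v U) + (v U - w U) \<in> I"
    using assms ideal_add[OF I] unfolding cong_mod_def by blast
  then show "u U - w U \<in> I"
    by simp
qed

lemma residue_class_eq: "cong_mod p l I v w \<Longrightarrow> residue_class p l R I v = residue_class p l R I w"
  unfolding residue_class_def using cong_mod_sym cong_mod_trans by blast

lemma mem_residue_class: "v \<in> level_vectors p l R \<Longrightarrow> v \<in> residue_class p l R I v"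
  unfolding residue_class_def using cong_mod_refl by blast

lemma residue_class_eqD:
  "w \<in> level_vectors p l R \<Longrightarrow> residue_class p l R I v = residue_class p l R I w \<Longrightarrow> cong_mod p l I v w"
  using mem_residue_class[of w] unfolding residue_class_def by blast

lemma mat_vec_level_vectors:
  "entries_in p l R A \<Longrightarrow> v \<in> level_vectors p l R \<Longrightarrow> mat_vec p l A v \<in> level_vectors p l R"
  unfolding level_vectors_def mat_vec_def entries_in_def
  by (auto intro!: subring_sum[OF R] subring_mult[OF R])

lemma mat_vec_cong:
  assumes A: "entries_in p l R A" and vw: "cong_mod p l I v w"
  shows "cong_mod p l I (mat_vec p l A v) (mat_vec p l A w)"
  unfolding cong_mod_def
proof
  fix U assume U: "U \<in> words p l"
  have "mat_vec p l A v U - mat_vec p l A w U = (\<Sum>V\<in>words p l. A U V * (v V - w V))"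
    using U unfolding mat_vec_def by (simp add: sum_subtractf right_diff_distrib)
  also have "\<dots> \<in> I"
    using A U vw unfolding entries_in_def cong_mod_def by (intro ideal_sum[OF I] ideal_mult_left[OF I]) auto
  finally show "mat_vec p l A v U - mat_vec p l A w U \<in> I" .
qed

lemma class_action_residue_class:
  assumes A: "entries_in p l R A" and v: "v \<in> level_vectors p l R"
  shows "class_action p l R I A (residue_class p l R I v) = residue_class p l R I (mat_vec p l A v)"
  unfolding class_action_def residue_class_def
  using mat_vec_cong[OF A] cong_mod_trans mem_residue_class[OF v] unfolding residue_class_def by blast

lemma class_action_mem:
  "entries_in p l R A \<Longrightarrow> Q \<in> residue_classes p l R I \<Longrightarrow> class_action p l R I A Q \<in> residue_classes p l R I"
  unfolding residue_classes_def using class_action_residue_class mat_vec_level_vectors by auto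

lemma finite_residue_classes:
  assumes "finite_index R I"
  shows "finite (residue_classes p l R I)"
proof -
  obtain C where C: "finite C" "\<And>r. r \<in> R \<Longrightarrow> \<exists>c\<in>C. r - c \<in> I"
    using assms unfolding finite_index_def by blast
  define extend where "extend f = (\<lambda>U. if U \<in> words p l then f U else 0)" for f :: "nat list \<Rightarrow> 'a"
  have "residue_classes p l R I \<subseteq> residue_class p l R I ` extend ` (words p l \<rightarrow>\<^sub>E C)"
  proof
    fix Q assume "Q \<in> residue_classes p l R I"
    then obtain v where v: "v \<in> level_vectors p l R" "Q = residue_class p l R I v"
      unfolding residue_classes_def by blast
    then have "\<forall>U\<in>words p l. \<exists>c\<in>C. v U - c \<in> I"
      using C(2) unfolding level_vectors_def by blast
    then obtain f where f: "\<And>U. U \<in> words p l \<Longrightarrow> f U \<in> C \<and> v U - f U \<in> I"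
      by metis
    have "cong_mod p l I v (extend f)"
      using f by (simp add: cong_mod_def extend_def)
    then have "Q = residue_class p l R I (extend f)"
      using v(2) residue_class_eq by simp
    moreover have "restrict f (words p l) \<in> words p l \<rightarrow>\<^sub>E C" "extend (restrict f (words p l)) = extend f"
      using f by (auto simp: extend_def)
    ultimately show "Q \<in> residue_class p l R I ` extend ` (words p l \<rightarrow>\<^sub>E C)"
      by (metis image_eqI)
  qed
  then show ?thesis
    using C(1) finite_words by (auto intro: finite_subset simp: finite_PiE)
qed

end

context
  fixes p l :: nat and R I :: "'k::field set"
  assumes R: "is_subring R" and I: "is_ideal R I"
begin

lemma class_action_rec_mult:
  assumes "entries_in p l R A" "entries_in p l R B" "Q \<in> residue_classes p l R I"
  shows "class_action p l R I (rec_mult p A B) Q = class_action p l R I A (class_action p l R I B Q)"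
proof -
  obtain v where v: "v \<in> level_vectors p l R" "Q = residue_class p l R I v"
    using assms(3) unfolding residue_classes_def by blast
  then show ?thesis
    using assms(1,2)
    by (simp add: class_action_residue_class[OF R I] entries_in_rec_mult[OF R] mat_vec_rec_mult mat_vec_level_vectors[OF R I])
qed

lemma class_action_rec_id:
  assumes "Q \<in> residue_classes p l R I"
  shows "class_action p l R I (rec_id p) Q = Q"
proof -
  obtain v where v: "v \<in> level_vectors p l R" "Q = residue_class p l R I v"
    using assms unfolding residue_classes_def by blast
  then show ?thesis
    using class_action_residue_class[OF R I entries_in_rec_id[OF R] v(1)] mat_vec_rec_id[OF v(1)] by simp
qed

end

section \<open>Residual finiteness\<close>

lemma finite_carrier_BijGroup:
  assumes "finite S"
  shows "finite (carrier (BijGroup S))"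
proof (rule finite_subset)
  show "carrier (BijGroup S) \<subseteq> S \<rightarrow>\<^sub>E S"
  proof
    fix f assume "f \<in> carrier (BijGroup S)"
    then have "f \<in> Bij S"
      by (simp add: BijGroup_def)
    then show "f \<in> S \<rightarrow>\<^sub>E S"
      using Bij_imp_funcset[of f S] Bij_imp_extensional[of f S] by (simp add: PiE_iff Pi_iff)
  qed
  show "finite (S \<rightarrow>\<^sub>E S)"
    using assms by (simp add: finite_PiE)
qed

lemma class_action_hom:
  fixes \<Gamma> :: "(nat list \<Rightarrow> nat list \<Rightarrow> 'k::field) set"
  assumes R: "is_subring R" and I: "is_ideal R I"
    and \<Gamma>: "\<Gamma> \<subseteq> carrier (GL_rec p)" "\<And>A. A \<in> \<Gamma> \<Longrightarrow> inv\<^bsub>GL_rec p\<^esub> A \<in> \<Gamma>"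
    and entries: "\<And>A. A \<in> \<Gamma> \<Longrightarrow> entries_in p l R A"
  shows "(\<lambda>A. restrict (class_action p l R I A) (residue_classes p l R I))
    \<in> hom (GL_rec p\<lparr>carrier := \<Gamma>\<rparr>) (BijGroup (residue_classes p l R I))"
proof -
  define Qs where "Qs = residue_classes p l R I"
  define h where "h A = restrict (class_action p l R I A) Qs" for A
  have act_mult: "class_action p l R I (rec_mult p A B) Q = class_action p l R I A (class_action p l R I B Q)"
    and act_mem: "class_action p l R I A Q \<in> Qs"
    if "A \<in> \<Gamma>" "B \<in> \<Gamma>" "Q \<in> Qs" for A B Q
    using that class_action_rec_mult[OF R I] class_action_mem[OF R I] entries unfolding Qs_def by auto
  have "h A \<in> Bij Qs" if A: "A \<in> \<Gamma>" for A
  proof -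
    define B where "B = inv\<^bsub>GL_rec p\<^esub> A"
    have B: "B \<in> \<Gamma>" "rec_mult p B A = rec_id p" "rec_mult p A B = rec_id p"
      using \<Gamma> A GL_rec_inv[of A p] unfolding B_def by auto
    have "class_action p l R I B (class_action p l R I A Q) = Q"
      and "class_action p l R I A (class_action p l R I B Q) = Q" if "Q \<in> Qs" for Q
      using act_mult[OF B(1) A that] act_mult[OF A B(1) that] B(2,3) class_action_rec_id[OF R I] that
      unfolding Qs_def by simp_all
    then have "bij_betw (class_action p l R I A) Qs Qs"
      using act_mem A B(1) by (intro bij_betw_byWitness[where f' = "class_action p l R I B"]) auto
    then show ?thesis
      unfolding Bij_def h_def by (simp add: bij_betw_restrict_eq)
  qed
  moreover have "h (rec_mult p A B) = compose Qs (h A) (h B)" if "A \<in> \<Gamma>" "B \<in> \<Gamma>" for A B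
    unfolding h_def compose_def using that act_mult act_mem by (intro restrict_ext) auto
  ultimately show ?thesis
    unfolding Qs_def[symmetric] h_def[symmetric] by (auto simp: hom_def BijGroup_def GL_rec_mult)
qed

lemma class_action_nontrivial:
  assumes R: "is_subring R" and I: "is_ideal R I" and g: "entries_in p l R g"
    and UV: "U0 \<in> words p l" "V0 \<in> words p l" "g U0 V0 - (if U0 = V0 then 1 else 0) \<notin> I"
  shows "\<exists>Q\<in>residue_classes p l R I. class_action p l R I g Q \<noteq> Q"
proof -
  define e :: "nat list \<Rightarrow> 'a" where "e U = (if U = V0 then 1 else 0)" for U
  have e: "e \<in> level_vectors p l R"
    unfolding level_vectors_def e_def using UV(2) subring_0[OF R] subring_1[OF R] by auto
  have "mat_vec p l g e U0 = g U0 V0"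
    unfolding mat_vec_def e_def using UV(1,2) by (simp add: finite_words if_distrib cong: if_cong)
  then have "mat_vec p l g e U0 - e U0 \<notin> I"
    using UV(3) by (simp add: e_def)
  then have "\<not> cong_mod p l I (mat_vec p l g e) e"
    using UV(1) unfolding cong_mod_def by blast
  then have "class_action p l R I g (residue_class p l R I e) \<noteq> residue_class p l R I e"
    using class_action_residue_class[OF R I g e] residue_class_eqD[OF R I e] by auto
  then show ?thesis
    using e unfolding residue_classes_def by blast
qed

lemma GL_rec_separating_finite_quotient:
  fixes \<Gamma> :: "(nat list \<Rightarrow> nat list \<Rightarrow> 'k::field) set"
  assumes R: "is_subring R" and I: "is_ideal R I" "finite_index R I"
    and \<Gamma>: "\<Gamma> \<subseteq> carrier (GL_rec p)" "\<And>A. A \<in> \<Gamma> \<Longrightarrow> inv\<^bsub>GL_rec p\<^esub> A \<in> \<Gamma>"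
    and entries: "\<And>A. A \<in> \<Gamma> \<Longrightarrow> entries_in p l R A"
    and g: "g \<in> \<Gamma>" "U0 \<in> words p l" "V0 \<in> words p l" "g U0 V0 - (if U0 = V0 then 1 else 0) \<notin> I"
  shows "\<exists>(H :: ((nat list \<Rightarrow> 'k) set \<Rightarrow> (nat list \<Rightarrow> 'k) set) monoid) h.
    group H \<and> finite (carrier H) \<and> h \<in> hom (GL_rec p\<lparr>carrier := \<Gamma>\<rparr>) H \<and> h g \<noteq> \<one>\<^bsub>H\<^esub>"
proof -
  define Qs where "Qs = residue_classes p l R I"
  obtain Q where "Q \<in> Qs" "class_action p l R I g Q \<noteq> Q"
    using class_action_nontrivial[OF R I(1) entries[OF g(1)] g(2-4)] unfolding Qs_def by blast
  then have "restrict (class_action p l R I g) Qs \<noteq> \<one>\<^bsub>BijGroup Qs\<^esub>"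
    by (auto simp: BijGroup_def fun_eq_iff)
  then show ?thesis
    using group_BijGroup finite_carrier_BijGroup[OF finite_residue_classes[OF R I]]
      class_action_hom[OF R I(1) \<Gamma> entries] unfolding Qs_def by blast
qed

lemma finite_group_nat_copy:
  assumes G: "group G" "finite (carrier G)" and x: "x \<in> carrier G" "x \<noteq> \<one>\<^bsub>G\<^esub>"
  shows "\<exists>(H :: nat monoid) b. group H \<and> finite (carrier H) \<and> b \<in> hom G H \<and> b x \<noteq> \<one>\<^bsub>H\<^esub>"
proof -
  obtain b where b: "bij_betw b (carrier G) {0..<card (carrier G)}"
    using ex_bij_betw_finite_nat[OF G(2)] by blast
  define b' where "b' = the_inv_into (carrier G) b"
  have b'b: "b' (b y) = y" if "y \<in> carrier G" for y
    unfolding b'_def using b that by (simp add: bij_betw_def the_inv_into_f_f)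
  define H where "H = \<lparr>carrier = {0..<card (carrier G)}, monoid.mult = (\<lambda>u v. b (b' u \<otimes>\<^bsub>G\<^esub> b' v)),
    one = b \<one>\<^bsub>G\<^esub>\<rparr>"
  have hom: "b \<in> hom G H"
    unfolding hom_def H_def using b b'b by (auto simp: bij_betw_def group.is_monoid[OF G(1)] monoid.m_closed)
  then have "b \<in> iso G H"
    using b unfolding iso_def H_def by simp
  then have "group (H\<lparr>one := b \<one>\<^bsub>G\<^esub>\<rparr>)"
    by (rule group.iso_imp_img_group[OF G(1)])
  moreover have "H\<lparr>one := b \<one>\<^bsub>G\<^esub>\<rparr> = H"
    unfolding H_def by simp
  moreover have "b x \<noteq> b \<one>\<^bsub>G\<^esub>"
    using b x group.is_monoid[OF G(1)] unfolding bij_betw_def inj_on_def by (metis monoid.one_closed)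
  ultimately show ?thesis
    using hom by (intro exI[of _ H] exI[of _ b]) (auto simp: H_def)
qed

lemma residually_finiteI:
  assumes "\<And>g. g \<in> carrier G \<Longrightarrow> g \<noteq> \<one>\<^bsub>G\<^esub> \<Longrightarrow>
    \<exists>(H :: 'c monoid) h. group H \<and> finite (carrier H) \<and> h \<in> hom G H \<and> h g \<noteq> \<one>\<^bsub>H\<^esub>"
  shows "residually_finite G"
  unfolding residually_finite_def
proof (intro ballI impI)
  fix g assume g: "g \<in> carrier G" "g \<noteq> \<one>\<^bsub>G\<^esub>"
  obtain H :: "'c monoid" and h where H: "group H" "finite (carrier H)" "h \<in> hom G H" "h g \<noteq> \<one>\<^bsub>H\<^esub>"
    using assms[OF g] by blast
  moreover have "h g \<in> carrier H"
    using H(3) g(1) unfolding hom_def by auto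
  ultimately obtain N :: "nat monoid" and b where N: "group N" "finite (carrier N)" "b \<in> hom H N"
      "b (h g) \<noteq> \<one>\<^bsub>N\<^esub>"
    using finite_group_nat_copy by metis
  then have "b \<circ> h \<in> hom G N"
    using H(3) unfolding hom_def by (auto simp: Pi_def)
  then show "\<exists>(N :: nat monoid) h. group N \<and> finite (carrier N) \<and> h \<in> hom G N \<and> h g \<noteq> \<one>\<^bsub>N\<^esub>"
    using N by (intro exI[of _ N] exI[of _ "b \<circ> h"]) simp
qed

lemma residually_finite_GL_rec_subgroup:
  fixes \<Gamma> :: "(nat list \<Rightarrow> nat list \<Rightarrow> 'k::field) set"
  assumes \<Gamma>: "\<Gamma> \<subseteq> carrier (GL_rec p)" "\<And>A. A \<in> \<Gamma> \<Longrightarrow> inv\<^bsub>GL_rec p\<^esub> A \<in> \<Gamma>"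
    and entries: "\<And>l. \<exists>R. is_subring R \<and> separated_by_finite_fields R \<and> (\<forall>A\<in>\<Gamma>. entries_in p l R A)"
  shows "residually_finite (GL_rec p\<lparr>carrier := \<Gamma>\<rparr>)"
proof (rule residually_finiteI)
  fix g assume "g \<in> carrier (GL_rec p\<lparr>carrier := \<Gamma>\<rparr>)" "g \<noteq> \<one>\<^bsub>GL_rec p\<lparr>carrier := \<Gamma>\<rparr>\<^esub>"
  then have g: "g \<in> \<Gamma>" "g \<noteq> \<one>\<^bsub>GL_rec p\<^esub>"
    by simp_all
  then obtain l U0 V0 where UV: "U0 \<in> words p l" "V0 \<in> words p l" "g U0 V0 \<noteq> (if U0 = V0 then 1 else 0)"
    using GL_rec_ne_one_entry \<Gamma>(1) by blast
  obtain R where R: "is_subring R" "separated_by_finite_fields R" "\<And>A. A \<in> \<Gamma> \<Longrightarrow> entries_in p l R A"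
    using entries by blast
  have "g U0 V0 - (if U0 = V0 then 1 else 0) \<in> R"
    using R(3)[OF g(1)] UV(1,2) subring_diff[OF R(1)] subring_0[OF R(1)] subring_1[OF R(1)]
    unfolding entries_in_def by simp
  then obtain I where I: "finite_residue_field R I" "g U0 V0 - (if U0 = V0 then 1 else 0) \<notin> I"
    using R(2) UV(3) unfolding separated_by_finite_fields_def by fastforce
  then have "is_ideal R I" "finite_index R I"
    unfolding finite_residue_field_def by auto
  then show "\<exists>(H :: ((nat list \<Rightarrow> 'k) set \<Rightarrow> (nat list \<Rightarrow> 'k) set) monoid) h. group H
      \<and> finite (carrier H) \<and> h \<in> hom (GL_rec p\<lparr>carrier := \<Gamma>\<rparr>) H \<and> h g \<noteq> \<one>\<^bsub>H\<^esub>"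
    by (rule GL_rec_separating_finite_quotient[OF R(1) _ _ \<Gamma> R(3) g(1) UV(1,2) I(2)])
qed

lemma separated_UNIV_finite_field:
  assumes "finite (UNIV :: 'a::field set)"
  shows "separated_by_finite_fields (UNIV :: 'a set)"
proof -
  have "finite_residue_field (UNIV :: 'a set) {0}"
    unfolding finite_residue_field_def is_ideal_def finite_index_def
    using assms by (auto intro!: exI[of _ UNIV]) (metis right_inverse)
  then show ?thesis
    unfolding separated_by_finite_fields_def by blast
qed

lemma residually_finite_GL_rec_finite_field:
  assumes "finite (UNIV :: 'k::field set)"
  shows "residually_finite (GL_rec p :: (nat list \<Rightarrow> nat list \<Rightarrow> 'k) monoid)"
proof -
  have "is_subring (UNIV :: 'k set)"
    unfolding is_subring_def by simp
  then have "residually_finite (GL_rec p\<lparr>carrier := carrier (GL_rec p)\<rparr> :: (_ \<Rightarrow> _ \<Rightarrow> 'k) monoid)"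
    using separated_UNIV_finite_field[OF assms] GL_rec_inv(1)
    by (intro residually_finite_GL_rec_subgroup) (auto simp: entries_in_def)
  then show ?thesis
    by simp
qed

lemma entries_in_generate:
  assumes R: "is_subring R"
    and S: "\<And>A. A \<in> S \<Longrightarrow> entries_in p l R A \<and> entries_in p l R (inv\<^bsub>GL_rec p\<^esub> A)"
  shows "A \<in> generate (GL_rec p) S \<Longrightarrow> entries_in p l R A"
  by (induction rule: generate.induct)
    (auto simp: GL_rec_one GL_rec_mult entries_in_rec_id[OF R] entries_in_rec_mult[OF R] S)

lemma residually_finite_generate_GL_rec:
  fixes S :: "(nat list \<Rightarrow> nat list \<Rightarrow> 'k::field) set"
  assumes S: "finite S" and \<Gamma>: "subgroup (generate (GL_rec p) S) (GL_rec p)"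
  shows "residually_finite (GL_rec p\<lparr>carrier := generate (GL_rec p) S\<rparr>)"
proof (rule residually_finite_GL_rec_subgroup)
  fix l
  define E where "E = (\<lambda>(A, U, V). A U V) ` ((S \<union> m_inv (GL_rec p) ` S) \<times> words p l \<times> words p l)"
  have "finite E"
    unfolding E_def using S finite_words by simp
  then obtain R where R: "is_subring R" "separated_by_finite_fields R" "E \<subseteq> R"
    using finitely_generated_subring_separated by blast
  have "A U V \<in> R" if "A \<in> S \<union> m_inv (GL_rec p) ` S" "U \<in> words p l" "V \<in> words p l" for A U V
  proof -
    have "(A, U, V) \<in> (S \<union> m_inv (GL_rec p) ` S) \<times> words p l \<times> words p l"
      using that by blast
    then have "(\<lambda>(A, U, V). A U V) (A, U, V) \<in> E"
      unfolding E_def by (rule imageI)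
    then show ?thesis
      using R(3) by auto
  qed
  then have "entries_in p l R A \<and> entries_in p l R (inv\<^bsub>GL_rec p\<^esub> A)" if "A \<in> S" for A
    using that unfolding entries_in_def by blast
  then show "\<exists>R. is_subring R \<and> separated_by_finite_fields R
      \<and> (\<forall>A\<in>generate (GL_rec p) S. entries_in p l R A)"
    using R(1,2) entries_in_generate[OF R(1)] by blast
qed (use subgroup.subset[OF \<Gamma>] subgroup.m_inv_closed[OF \<Gamma>] in auto)

theorem mainTheorem13:
  fixes p :: nat
  shows "(finite (UNIV :: 'k::field set) \<longrightarrow> residually_finite (GL_rec p :: (nat list \<Rightarrow> nat list \<Rightarrow> 'k) monoid))
    \<and> (\<forall>(\<Gamma> :: (nat list \<Rightarrow> nat list \<Rightarrow> 'k) set) S.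
          subgroup \<Gamma> (GL_rec p) \<and> finite S \<and> S \<subseteq> carrier (GL_rec p)
          \<and> \<Gamma> = generate (GL_rec p) S
        \<longrightarrow> residually_finite ((GL_rec p) \<lparr>carrier := \<Gamma>\<rparr>))"
  using residually_finite_GL_rec_finite_field residually_finite_generate_GL_rec by blast

end
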